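(* For every integer $k\ge1$ there is a family $\mathcal E_k$ of infinite subsets of $\omega$ with $|\mathcal E_k|=2^\omega$ such that: (a) if $e_0,\dots,e_{k-1}\in\mathcal E_k$ then $\bigcap_{i<k}e_i$ is infinite; (b) if $e_0,\dots,e_k$ are distinct elements of $\mathcal E_k$ then $\bigcap_{i\le k}e_i$ is finite; (c) for every uncountable $X\subseteq\mathcal E_k$ there are uncountable $X_0,\dots,X_k\subseteq X$ such that $\bigcap_{i\le k}\bigcup X_i$ is finite. *)

theory Defs
  imports Main "HOL-Library.Equipollence" "HOL-Library.Countable_Set"
begin

end

theory Submission
  imports Defs
begin

text \<open>
  Subsets \<open>A\<close> of \<open>\<omega>\<close> are read as branches through the binary tree, and \<open>\<omega>\<close> is
  identified with the codes of lists of binary strings. The set \<open>E\<^sub>A\<close> (\<open>branch_codes k A\<close>)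
  consists of the codes of the lists of at most \<open>k\<close> nodes of one common level that contain
  the node of \<open>A\<close> at that level. Any \<open>k\<close> branches meet in one such list at every level, so
  \<open>k\<close> of the sets \<open>E\<^sub>A\<close> have an infinite intersection. Distinct branches split from some
  level on, and beyond that level \<open>k + 1\<close> distinct branches (or branches through \<open>k + 1\<close>
  distinct nodes) cannot fit into one list of length \<open>k\<close>, so only codes of lists of shorter
  strings remain. Finally, a condensation argument shows that an uncountable set of branches
  has \<open>k + 1\<close> distinct nodes of one level, each lying on uncountably many of its branches.
\<close>

definition branch_node :: "nat set \<Rightarrow> nat \<Rightarrow> bool list" where
  "branch_node A n = map (\<lambda>i. i \<in> A) [0..<n]"

definition branch_codes :: "nat \<Rightarrow> nat set \<Rightarrow> nat set" where
  "branch_codes k A = to_nat ` {L :: bool list list. length L \<le> k \<and>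
      (\<exists>n. (\<forall>s\<in>set L. length s = n) \<and> branch_node A n \<in> set L)}"

lemma length_branch_node [simp]: "length (branch_node A n) = n"
  by (auto simp: branch_node_def)

lemma take_branch_node: "m \<le> n \<Longrightarrow> take m (branch_node A n) = branch_node A m"
  by (simp add: branch_node_def take_map)

lemma branch_node_eq_iff: "branch_node A n = branch_node B n \<longleftrightarrow> (\<forall>i<n. i \<in> A \<longleftrightarrow> i \<in> B)"
  by (auto simp: branch_node_def)

lemma branch_node_neq_mono:
  "branch_node A m \<noteq> branch_node B m \<Longrightarrow> m \<le> n \<Longrightarrow> branch_node A n \<noteq> branch_node B n"
  by (metis take_branch_node)

lemma eventually_inj_on_branch_node:
  assumes "finite S"
  shows "\<forall>\<^sub>F n in sequentially. inj_on (\<lambda>A. branch_node A n) S"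
proof -
  have split: "\<forall>\<^sub>F n in sequentially. A \<noteq> B \<longrightarrow> branch_node A n \<noteq> branch_node B n" for A B
  proof (cases "A = B")
    case False
    then obtain i where "i \<in> A \<longleftrightarrow> i \<notin> B" by blast
    then have "branch_node A (Suc i) \<noteq> branch_node B (Suc i)"
      by (auto simp: branch_node_eq_iff)
    then show ?thesis
      using branch_node_neq_mono by (auto intro!: eventually_sequentiallyI[of "Suc i"])
  qed simp
  have "\<forall>\<^sub>F n in sequentially. \<forall>A\<in>S. \<forall>B\<in>S. A \<noteq> B \<longrightarrow> branch_node A n \<noteq> branch_node B n"
    using assms split by (simp add: eventually_ball_finite)
  then show ?thesis
    by (rule eventually_mono) (auto simp: inj_on_def)
qed

lemma to_nat_mem_branch_codes_iff:
  "to_nat L \<in> branch_codes k A \<longleftrightarrow>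
     length L \<le> k \<and> (\<exists>n. (\<forall>s\<in>set L. length s = n) \<and> branch_node A n \<in> set L)"
  by (auto simp: branch_codes_def)

lemma branch_node_mem_code:
  assumes "to_nat L \<in> branch_codes k A" and "\<forall>s\<in>set L. length s = n"
  shows "branch_node A n \<in> set L"
  using assms by (auto simp: to_nat_mem_branch_codes_iff)

lemma inj_branch_codes:
  assumes "0 < k"
  shows "inj (branch_codes k)"
proof
  fix A B assume eq: "branch_codes k A = branch_codes k B"
  have "to_nat [branch_node A n] \<in> branch_codes k B" for n
    using assms unfolding eq[symmetric] by (auto simp: to_nat_mem_branch_codes_iff)
  then have "branch_node B n = branch_node A n" for n
    by (simp add: to_nat_mem_branch_codes_iff)
  then show "A = B"
    by (metis branch_node_eq_iff lessI set_eqI)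
qed

lemma infinite_Inter_branch_codes:
  assumes "0 < k"
  shows "infinite (\<Inter>i<k. branch_codes k (A i))"
proof -
  define code where "code n = to_nat (map (\<lambda>i. branch_node (A i) n) [0..<k])" for n
  have "code n \<in> branch_codes k (A i)" if "i < k" for n i
    unfolding code_def to_nat_mem_branch_codes_iff using that by (intro conjI exI[of _ n]) auto
  then have "range code \<subseteq> (\<Inter>i<k. branch_codes k (A i))"
    by blast
  moreover have "inj code"
  proof
    fix m n assume "code m = code n"
    then have "map (\<lambda>i. branch_node (A i) m) [0..<k] = map (\<lambda>i. branch_node (A i) n) [0..<k]"
      by (simp add: code_def)
    then have "branch_node (A 0) m = branch_node (A 0) n"
      using assms by (simp add: upt_conv_Cons)
    then show "m = n"
      by (metis length_branch_node)
  qed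
  ultimately show ?thesis
    using range_inj_infinite infinite_super by blast
qed

lemma infinite_branch_codes:
  assumes "0 < k"
  shows "infinite (branch_codes k A)"
proof -
  have "(\<Inter>i<k. branch_codes k A) = branch_codes k A"
    using assms by auto
  then show ?thesis
    using infinite_Inter_branch_codes[OF assms, of "\<lambda>_. A"] by simp
qed

lemma finite_Inter_Union_branch_codes:
  fixes F :: "nat \<Rightarrow> nat set set"
  assumes separated: "\<And>i j A B. i \<le> k \<Longrightarrow> j \<le> k \<Longrightarrow> i \<noteq> j \<Longrightarrow> A \<in> F i \<Longrightarrow> B \<in> F j \<Longrightarrow>
      branch_node A N \<noteq> branch_node B N"
  shows "finite (\<Inter>i\<le>k. \<Union>A\<in>F i. branch_codes k A)"
proof -
  let ?short = "{L :: bool list list. set L \<subseteq> {s. length s < N} \<and> length L \<le> k}"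
  have "finite {s :: bool list. length s < N}"
    using finite_lists_length_le[of "UNIV :: bool set" N]
    by (rule finite_subset[rotated]) auto
  then have "finite (to_nat ` ?short)"
    by (intro finite_imageI finite_lists_length_le)
  moreover have "(\<Inter>i\<le>k. \<Union>A\<in>F i. branch_codes k A) \<subseteq> to_nat ` ?short"
  proof
    fix x assume "x \<in> (\<Inter>i\<le>k. \<Union>A\<in>F i. branch_codes k A)"
    then have "\<forall>i\<in>{..k}. \<exists>A\<in>F i. x \<in> branch_codes k A" by blast
    then obtain A where A: "\<And>i. i \<le> k \<Longrightarrow> A i \<in> F i \<and> x \<in> branch_codes k (A i)"
      by (metis atMost_iff bchoice)
    from A[OF le0] obtain L :: "bool list list" and n
      where L: "x = to_nat L" "length L \<le> k" "\<forall>s\<in>set L. length s = n"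
      unfolding branch_codes_def by blast
    have nodes: "(\<lambda>i. branch_node (A i) n) ` {..k} \<subseteq> set L"
      using A L by (auto intro: branch_node_mem_code)
    have "n < N"
    proof (rule ccontr)
      assume "\<not> n < N"
      have "inj_on (\<lambda>i. branch_node (A i) n) {..k}"
      proof (rule inj_onI, rule ccontr)
        fix i j assume "i \<in> {..k}" "j \<in> {..k}" "i \<noteq> j"
          and eq: "branch_node (A i) n = branch_node (A j) n"
        then have "branch_node (A i) N \<noteq> branch_node (A j) N"
          using A separated by simp
        with \<open>\<not> n < N\<close> eq show False
          using branch_node_neq_mono by simp
      qed
      then have "Suc k \<le> card (set L)"
        using card_inj_on_le[OF _ nodes] by simp
      with L(2) card_length[of L] show False by simp
    qed
    with L show "x \<in> to_nat ` ?short" by auto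
  qed
  ultimately show ?thesis
    by (rule finite_subset[rotated])
qed

lemma finite_Inter_branch_codes:
  assumes "inj_on A {..k}"
  shows "finite (\<Inter>i\<le>k. branch_codes k (A i))"
proof -
  obtain N where "inj_on (\<lambda>B. branch_node B N) (A ` {..k})"
    using eventually_inj_on_branch_node[of "A ` {..k}"] eventually_sequentially by auto
  then have "i \<le> k \<Longrightarrow> j \<le> k \<Longrightarrow> i \<noteq> j \<Longrightarrow> branch_node (A i) N \<noteq> branch_node (A j) N" for i j
    using assms by (auto simp: inj_on_def)
  then show ?thesis
    using finite_Inter_Union_branch_codes[of k "\<lambda>i. {A i}" N] by auto
qed

lemma uncountable_condensation_branches:
  fixes Y :: "nat set set"
  assumes "uncountable Y"
  shows "uncountable {A. \<forall>n. uncountable {B\<in>Y. branch_node B n = branch_node A n}}"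
    (is "uncountable ?K")
proof
  assume "countable ?K"
  let ?thin = "{s. countable {B\<in>Y. branch_node B (length s) = s}}"
  have "Y \<subseteq> ?K \<union> (\<Union>s\<in>?thin. {B\<in>Y. branch_node B (length s) = s})"
  proof
    fix A assume "A \<in> Y"
    show "A \<in> ?K \<union> (\<Union>s\<in>?thin. {B\<in>Y. branch_node B (length s) = s})"
    proof (cases "A \<in> ?K")
      case False
      then obtain n where "countable {B\<in>Y. branch_node B n = branch_node A n}"
        by auto
      then show ?thesis
        using \<open>A \<in> Y\<close> by (intro UnI2 UN_I[of "branch_node A n"]) auto
    qed simp
  qed
  moreover have "countable (\<Union>s\<in>?thin. {B\<in>Y. branch_node B (length s) = s})"
    by (rule countable_UN[OF countableI_type]) simp
  ultimately have "countable Y"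
    using \<open>countable ?K\<close> by (meson countable_Un countable_subset)
  with assms show False
    by simp
qed

lemma uncountable_branches_through_distinct_nodes:
  fixes Y :: "nat set set" and k :: nat
  assumes "uncountable Y"
  shows "\<exists>m s. inj_on s {..k} \<and> (\<forall>i\<le>k. uncountable {A\<in>Y. branch_node A m = s i})"
proof -
  let ?K = "{A. \<forall>n. uncountable {B\<in>Y. branch_node B n = branch_node A n}}"
  have "infinite ?K"
    using uncountable_condensation_branches[OF assms] countable_finite by blast
  then obtain g :: "nat \<Rightarrow> nat set" where g: "inj g" "range g \<subseteq> ?K"
    using infinite_countable_subset by blast
  have "\<forall>\<^sub>F m in sequentially. inj_on (\<lambda>A. branch_node A m) (g ` {..k})"
    by (rule eventually_inj_on_branch_node) simp
  then obtain m where "inj_on (\<lambda>A. branch_node A m) (g ` {..k})"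
    unfolding eventually_sequentially by blast
  then have "inj_on (\<lambda>i. branch_node (g i) m) {..k}"
    using comp_inj_on[OF inj_on_subset[OF g(1) subset_UNIV]] by (simp add: o_def)
  moreover have "\<forall>i\<le>k. uncountable {A\<in>Y. branch_node A m = branch_node (g i) m}"
    using g(2) by auto
  ultimately show ?thesis by blast
qed

lemma uncountable_branch_code_family_split:
  assumes "0 < k" and "X \<subseteq> range (branch_codes k)" and "uncountable X"
  shows "\<exists>Xs. (\<forall>i\<le>k. Xs i \<subseteq> X \<and> uncountable (Xs i)) \<and> finite (\<Inter>i\<le>k. \<Union>(Xs i))"
proof -
  define Y where "Y = branch_codes k -` X"
  have X_eq: "X = branch_codes k ` Y"
    using assms(2) by (auto simp: Y_def)
  with assms(3) have "uncountable Y"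
    by auto
  then obtain m s where s: "inj_on s {..k}" "\<forall>i\<le>k. uncountable {A\<in>Y. branch_node A m = s i}"
    using uncountable_branches_through_distinct_nodes by blast
  let ?F = "\<lambda>i. {A\<in>Y. branch_node A m = s i}"
  have separated: "branch_node A m \<noteq> branch_node B m"
    if "i \<le> k" "j \<le> k" "i \<noteq> j" "A \<in> ?F i" "B \<in> ?F j" for i j A B
    using that inj_on_contraD[OF s(1), of i j] by simp
  show ?thesis
  proof (intro exI[of _ "\<lambda>i. branch_codes k ` ?F i"] conjI allI impI)
    fix i assume "i \<le> k"
    show "branch_codes k ` ?F i \<subseteq> X"
      using X_eq by auto
    have "inj_on (branch_codes k) (?F i)"
      using inj_branch_codes[OF assms(1)] by (rule inj_on_subset) simp
    then show "uncountable (branch_codes k ` ?F i)"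
      using countable_image_inj_on s(2) \<open>i \<le> k\<close> by blast
  next
    show "finite (\<Inter>i\<le>k. \<Union>(branch_codes k ` ?F i))"
      using separated by (rule finite_Inter_Union_branch_codes)
  qed
qed

theorem lemma5p3:
  fixes k :: nat
  assumes "k \<ge> 1"
  shows "\<exists>\<E> :: nat set set.
     (\<forall>e\<in>\<E>. infinite e) \<and>
     \<E> \<approx> (UNIV :: nat set set) \<and>
     (\<forall>e :: nat \<Rightarrow> nat set. (\<forall>i<k. e i \<in> \<E>) \<longrightarrow> infinite (\<Inter>i<k. e i)) \<and>
     (\<forall>e :: nat \<Rightarrow> nat set. (\<forall>i\<le>k. e i \<in> \<E>) \<and> inj_on e {..k} \<longrightarrow> finite (\<Inter>i\<le>k. e i)) \<and>
     (\<forall>X. X \<subseteq> \<E> \<and> uncountable X \<longrightarrow>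
        (\<exists>Xs :: nat \<Rightarrow> nat set set. (\<forall>i\<le>k. Xs i \<subseteq> X \<and> uncountable (Xs i)) \<and>
            finite (\<Inter>i\<le>k. \<Union>(Xs i))))"
proof (intro exI[of _ "range (branch_codes k)"] conjI allI impI ballI)
  have k: "0 < k" using assms by simp
  let ?A = "\<lambda>e. inv (branch_codes k) e"
  have Inter_range_eq: "(\<Inter>i\<in>I. e i) = (\<Inter>i\<in>I. branch_codes k (?A (e i)))"
    if "\<forall>i\<in>I. e i \<in> range (branch_codes k)" for I e
    using that by (intro INF_cong refl) (simp add: f_inv_into_f)
  show "infinite e" if "e \<in> range (branch_codes k)" for e
    using that infinite_branch_codes[OF k] by blast
  show "range (branch_codes k) \<approx> (UNIV :: nat set set)"
    using inj_branch_codes[OF k] by (rule inj_on_image_eqpoll_self)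
  show "infinite (\<Inter>i<k. e i)" if "\<forall>i<k. e i \<in> range (branch_codes k)" for e
    using Inter_range_eq[of "{..<k}" e] that infinite_Inter_branch_codes[OF k] by simp
  show "finite (\<Inter>i\<le>k. e i)" if "(\<forall>i\<le>k. e i \<in> range (branch_codes k)) \<and> inj_on e {..k}" for e
  proof -
    have "inj_on (\<lambda>i. ?A (e i)) {..k}"
      using that by (auto simp: inj_on_def dest: inv_into_injective)
    then show ?thesis
      using Inter_range_eq[of "{..k}" e] that finite_Inter_branch_codes by simp
  qed
  show "\<exists>Xs. (\<forall>i\<le>k. Xs i \<subseteq> X \<and> uncountable (Xs i)) \<and> finite (\<Inter>i\<le>k. \<Union>(Xs i))"
    if "X \<subseteq> range (branch_codes k) \<and> uncountable X" for X
    using that k by (intro uncountable_branch_code_family_split) auto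
qed

end
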